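(* Consider the Latex Particles Morphology Formation population balance system described in the context, with $a\le 0$, $0<b<1$ and $v_0=\lambda_{\mathrm{c}}>0$, and let $m,w$ be its solutions. Let $x,y\in\mathbb{R}$ be finite with $x\le y$, and let $T<\infty$ be fixed. Then there exist strictly positive finite quantities $K^x_m, K^x_w$, depending on $x$ but independent of time $t$, such that the moments $M^x(t):=\int_0^\infty v^x m(v,t)\,dv$, $W^x(t):=\int_0^\infty v^x w(v,t)\,dv$ satisfy $M^x(t)\le K^x_m+M^y(t)$ and $W^x(t)\le K^x_w+W^y(t)$ for all $t\in[0,T]$.
   Context: Fix real constants $a,b$ and positive constants $\lambda_{\mathrm{a}},\lambda_{\mathrm{c}},\lambda_{\mathrm{d}},\lambda_{\mathrm{m}},\lambda_{\mathrm{n}},\lambda_{\mathrm{p}},\lambda_{\mathrm{pol1}}$, $\bar\Psi>0$, $\Psi_r>0$, $\Phi_s\in(0,1)$. Set $v_0:=\lambda_{\mathrm{c}}$ and $\mu:=\lambda_{\mathrm{m}}$. The unknowns are densities $m(v,t), w(v,t)$ ($v,t\ge 0$) and scalar functions $V^{\mathrm{mat}}(t),V^{\mathrm{c_m}}(t),V^{\mathrm{c_w}}(t),\Psi(t),V_{\mathrm{pol2}}(t)$. Define $\alpha(v,u,t):=\tilde\alpha_0(t)[v^a+u^a]$, $\tilde\alpha_0(t):=\lambda_{\mathrm{a}}(\Psi(t)+1)^{14/3}$; $g(v,t):=\tilde\varrho_{\mathrm{d}}(t)v^b+\tilde\varrho_{\mathrm{p}}(t)v$, $\tilde\varrho_{\mathrm{p}}(t):=\lambda_{\mathrm{p}}\Psi(t)/V_p(t)$,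 $\tilde\varrho_{\mathrm{d}}(t):=\lambda_{\mathrm{d}}\Phi(t)(\Psi(t)+1)^{2/3}$; $n(v,t):=\tilde\eta_0(t)\delta(v-v_0)$ with $\tilde\eta_0(t):=\lambda_{\mathrm{n}}\Phi(t)$ and $\delta$ the Dirac delta; $\Phi(t):=\max\{V^{\mathrm{mat}}(t)/[(\Psi(t)+1)(V^{\mathrm{mat}}(t)+\lambda_{\mathrm{pol1}})]-\Phi_s,0\}$; $V_p(t):=(\Psi(t)+1)[V^{\mathrm{mat}}(t)+V^{\mathrm{c_m}}(t)+V^{\mathrm{c_w}}(t)+\lambda_{\mathrm{pol1}}]$; $\Sigma_y(t):=(\Psi(t)+1)^{2/3}\int_0^\infty v^b y(v,t)\,dv$ for $y=m,w$. The system is: for all $v,t>0$, $\partial_t m=-\partial_v(g m)+n-\mu m-m(v,t)\int_0^\infty\alpha(v,u,t)m(u,t)\,du+\tfrac12\int_0^v\alpha(v-u,u,t)m(v-u,t)m(u,t)\,du$, $\partial_t w=-\partial_v(g w)+\mu m-w(v,t)\int_0^\infty\alpha(v,u,t)w(u,t)\,du+\tfrac12\int_0^v\alpha(v-u,u,t)w(v-u,t)w(u,t)\,du$, with $m(v,0)=w(v,0)=0$, $m(0,t)=w(0,t)=0$; coupled to the ODEs $\dot V^{\mathrm{mat}}=\lambda_{\mathrm{p}}\frac{\Psi}{V_p}(V^{\mathrm{mat}}+\lambda_{\mathrm{pol1}})-\Phi[\lambda_{\mathrm{c}}\lambda_{\mathrm{n}}+\lambda_{\mathrm{d}}\Sigma_m+\lambda_{\mathrm{d}}\Sigma_w]$,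 $\dot V^{\mathrm{c_m}}=\lambda_{\mathrm{p}}\frac{\Psi}{V_p}V^{\mathrm{c_m}}+\Phi[\lambda_{\mathrm{c}}\lambda_{\mathrm{n}}+\lambda_{\mathrm{d}}\Sigma_m]-\lambda_{\mathrm{m}}V^{\mathrm{c_m}}$, $\dot V^{\mathrm{c_w}}=\lambda_{\mathrm{p}}\frac{\Psi}{V_p}V^{\mathrm{c_w}}+\lambda_{\mathrm{d}}\Phi\Sigma_w+\lambda_{\mathrm{m}}V^{\mathrm{c_m}}$, $\dot\Psi=-\lambda_{\mathrm{p}}\frac{\Psi}{\Psi+1}\frac{\Psi+\Psi_r}{V_{\mathrm{pol2}}+\lambda_{\mathrm{pol1}}}$, $\dot V_{\mathrm{pol2}}=\lambda_{\mathrm{p}}\frac{\Psi}{\Psi+1}$, with $V^{\mathrm{mat}}(0)=V^{\mathrm{c_m}}(0)=V^{\mathrm{c_w}}(0)=V_{\mathrm{pol2}}(0)=0$, $\Psi(0)=\bar\Psi$. Solutions $m,w$ are understood to be non-negative functions. *)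

theory Defs
  imports "HOL-Analysis.Analysis"
begin

record lpmf_params =
  pa :: real
  pb :: real
  lam_a :: real
  lam_c :: real
  lam_d :: real
  lam_m :: real
  lam_n :: real
  lam_p :: real
  lam_pol1 :: real
  Psi_bar :: real
  Psi_r :: real
  Phi_s :: real

definition v0 :: "lpmf_params \<Rightarrow> real" where "v0 P = lam_c P"
definition mu :: "lpmf_params \<Rightarrow> real" where "mu P = lam_m P"

definition params_ok :: "lpmf_params \<Rightarrow> bool" where
  "params_ok P \<longleftrightarrow> lam_a P > 0 \<and> lam_c P > 0 \<and> lam_d P > 0 \<and> lam_m P > 0 \<and> lam_n P > 0
     \<and> lam_p P > 0 \<and> lam_pol1 P > 0 \<and> Psi_bar P > 0 \<and> Psi_r P > 0
     \<and> 0 < Phi_s P \<and> Phi_s P < 1"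

definition Phi :: "lpmf_params \<Rightarrow> (real \<Rightarrow> real) \<Rightarrow> (real \<Rightarrow> real) \<Rightarrow> real \<Rightarrow> real" where
  "Phi P Vmat Psi t =
     max (Vmat t / ((Psi t + 1) * (Vmat t + lam_pol1 P)) - Phi_s P) 0"

definition Vp :: "lpmf_params \<Rightarrow> (real \<Rightarrow> real) \<Rightarrow> (real \<Rightarrow> real) \<Rightarrow> (real \<Rightarrow> real)
                   \<Rightarrow> (real \<Rightarrow> real) \<Rightarrow> real \<Rightarrow> real" where
  "Vp P Vmat Vcm Vcw Psi t = (Psi t + 1) * (Vmat t + Vcm t + Vcw t + lam_pol1 P)"

definition rho_p :: "lpmf_params \<Rightarrow> (real \<Rightarrow> real) \<Rightarrow> (real \<Rightarrow> real) \<Rightarrow> (real \<Rightarrow> real)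
                   \<Rightarrow> (real \<Rightarrow> real) \<Rightarrow> real \<Rightarrow> real" where
  "rho_p P Vmat Vcm Vcw Psi t = lam_p P * Psi t / Vp P Vmat Vcm Vcw Psi t"

definition rho_d :: "lpmf_params \<Rightarrow> (real \<Rightarrow> real) \<Rightarrow> (real \<Rightarrow> real) \<Rightarrow> real \<Rightarrow> real" where
  "rho_d P Vmat Psi t = lam_d P * Phi P Vmat Psi t * (Psi t + 1) powr (2/3)"

definition alpha0 :: "lpmf_params \<Rightarrow> (real \<Rightarrow> real) \<Rightarrow> real \<Rightarrow> real" where
  "alpha0 P Psi t = lam_a P * (Psi t + 1) powr (14/3)"

definition alpha :: "lpmf_params \<Rightarrow> (real \<Rightarrow> real) \<Rightarrow> real \<Rightarrow> real \<Rightarrow> real \<Rightarrow> real" where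
  "alpha P Psi v u t = alpha0 P Psi t * (v powr pa P + u powr pa P)"

definition growth :: "lpmf_params \<Rightarrow> (real \<Rightarrow> real) \<Rightarrow> (real \<Rightarrow> real) \<Rightarrow> (real \<Rightarrow> real)
                   \<Rightarrow> (real \<Rightarrow> real) \<Rightarrow> real \<Rightarrow> real \<Rightarrow> real" where
  "growth P Vmat Vcm Vcw Psi v t =
     rho_d P Vmat Psi t * v powr pb P + rho_p P Vmat Vcm Vcw Psi t * v"

text \<open>Nucleation intensity: \<open>n(v,t) = eta0(t) delta(v - v0)\<close>.\<close>
definition eta0 :: "lpmf_params \<Rightarrow> (real \<Rightarrow> real) \<Rightarrow> (real \<Rightarrow> real) \<Rightarrow> real \<Rightarrow> real" where
  "eta0 P Vmat Psi t = lam_n P * Phi P Vmat Psi t"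

definition Sigma :: "lpmf_params \<Rightarrow> (real \<Rightarrow> real) \<Rightarrow> (real \<Rightarrow> real \<Rightarrow> real) \<Rightarrow> real \<Rightarrow> real" where
  "Sigma P Psi y t = (Psi t + 1) powr (2/3) * (LINT v:{0<..}|lborel. v powr pb P * y v t)"

text \<open>Admissible test functions: continuously differentiable on the reals and vanishing
  for large sizes (they need not vanish at \<open>v = 0\<close>, so that the weak form encodes the
  boundary condition of zero flux at \<open>v = 0\<close>).\<close>
definition test_fun :: "(real \<Rightarrow> real) \<Rightarrow> bool" where
  "test_fun \<phi> \<longleftrightarrow> (\<forall>v. \<phi> differentiable (at v)) \<and> continuous_on UNIV (deriv \<phi>)
                    \<and> (\<exists>R. \<forall>v\<ge>R. \<phi> v = 0)"

definition agg_integrand ::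
  "lpmf_params \<Rightarrow> (real \<Rightarrow> real) \<Rightarrow> (real \<Rightarrow> real) \<Rightarrow> (real \<Rightarrow> real \<Rightarrow> real) \<Rightarrow> real \<Rightarrow> real \<times> real \<Rightarrow> real"
  where
  "agg_integrand P Psi \<phi> y t z = (case z of (v, u) \<Rightarrow>
      alpha P Psi v u t * (\<phi> (v + u) - \<phi> v - \<phi> u) * y v t * y u t)"

definition agg_weak ::
  "lpmf_params \<Rightarrow> (real \<Rightarrow> real) \<Rightarrow> (real \<Rightarrow> real) \<Rightarrow> (real \<Rightarrow> real \<Rightarrow> real) \<Rightarrow> real \<Rightarrow> real" where
  "agg_weak P Psi \<phi> y t =
     1/2 * (LINT z:({0<..} \<times> {0<..})|lborel. agg_integrand P Psi \<phi> y t z)"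

text \<open>The PDEs (with Dirac nucleation source and boundary condition \<open>m(0,t)=w(0,t)=0\<close>)
  are understood in the weak sense in the size variable, the ODEs classically.\<close>
definition lpmf_solution ::
  "lpmf_params \<Rightarrow> real \<Rightarrow> (real \<Rightarrow> real \<Rightarrow> real) \<Rightarrow> (real \<Rightarrow> real \<Rightarrow> real)
   \<Rightarrow> (real \<Rightarrow> real) \<Rightarrow> (real \<Rightarrow> real) \<Rightarrow> (real \<Rightarrow> real) \<Rightarrow> (real \<Rightarrow> real) \<Rightarrow> (real \<Rightarrow> real) \<Rightarrow> bool"
  where
  "lpmf_solution P T m w Vmat Vcm Vcw Psi Vpol2 \<longleftrightarrow>
    (let g = growth P Vmat Vcm Vcw Psi;
         Ph = Phi P Vmat Psi;
         VP = Vp P Vmat Vcm Vcw Psi;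
         Sm = Sigma P Psi m;
         Sw = Sigma P Psi w
     in
    \<comment> \<open>non-negativity, initial and boundary data\<close>
    (\<forall>v t. v \<ge> 0 \<longrightarrow> t \<in> {0..T} \<longrightarrow> m v t \<ge> 0 \<and> w v t \<ge> 0) \<and>
    (\<forall>v. v \<ge> 0 \<longrightarrow> m v 0 = 0 \<and> w v 0 = 0) \<and>
    (\<forall>t\<in>{0..T}. m 0 t = 0 \<and> w 0 t = 0) \<and>
    \<comment> \<open>integrability needed for the terms of the system to make sense\<close>
    (\<forall>t\<in>{0..T}. set_integrable lborel {0<..} (\<lambda>v. m v t)
              \<and> set_integrable lborel {0<..} (\<lambda>v. w v t)
              \<and> set_integrable lborel {0<..} (\<lambda>v. v powr pb P * m v t)
              \<and> set_integrable lborel {0<..} (\<lambda>v. v powr pb P * w v t)) \<and>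
    (\<forall>\<phi> t. test_fun \<phi> \<longrightarrow> t \<in> {0..T} \<longrightarrow>
       set_integrable lborel ({0<..} \<times> {0<..}) (agg_integrand P Psi \<phi> m t)
     \<and> set_integrable lborel ({0<..} \<times> {0<..}) (agg_integrand P Psi \<phi> w t)) \<and>
    \<comment> \<open>weak form of the equation for m\<close>
    (\<forall>\<phi> t. test_fun \<phi> \<longrightarrow> t \<in> {0..T} \<longrightarrow>
       ((\<lambda>s. LINT v:{0<..}|lborel. \<phi> v * m v s) has_real_derivative
          ((LINT v:{0<..}|lborel. deriv \<phi> v * g v t * m v t)
           + eta0 P Vmat Psi t * \<phi> (v0 P)
           - mu P * (LINT v:{0<..}|lborel. \<phi> v * m v t)
           + agg_weak P Psi \<phi> m t)) (at t within {0..T})) \<and>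
    \<comment> \<open>weak form of the equation for w\<close>
    (\<forall>\<phi> t. test_fun \<phi> \<longrightarrow> t \<in> {0..T} \<longrightarrow>
       ((\<lambda>s. LINT v:{0<..}|lborel. \<phi> v * w v s) has_real_derivative
          ((LINT v:{0<..}|lborel. deriv \<phi> v * g v t * w v t)
           + mu P * (LINT v:{0<..}|lborel. \<phi> v * m v t)
           + agg_weak P Psi \<phi> w t)) (at t within {0..T})) \<and>
    \<comment> \<open>the ODEs\<close>
    Vmat 0 = 0 \<and> Vcm 0 = 0 \<and> Vcw 0 = 0 \<and> Vpol2 0 = 0 \<and> Psi 0 = Psi_bar P \<and>
    (\<forall>t\<in>{0..T}.
       (Vmat has_real_derivative
          (lam_p P * Psi t / VP t * (Vmat t + lam_pol1 P)
           - Ph t * (lam_c P * lam_n P + lam_d P * Sm t + lam_d P * Sw t))) (at t within {0..T})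
     \<and> (Vcm has_real_derivative
          (lam_p P * Psi t / VP t * Vcm t + Ph t * (lam_c P * lam_n P + lam_d P * Sm t)
           - lam_m P * Vcm t)) (at t within {0..T})
     \<and> (Vcw has_real_derivative
          (lam_p P * Psi t / VP t * Vcw t + lam_d P * Ph t * Sw t + lam_m P * Vcm t))
          (at t within {0..T})
     \<and> (Psi has_real_derivative
          (- lam_p P * (Psi t / (Psi t + 1)) * ((Psi t + Psi_r P) / (Vpol2 t + lam_pol1 P))))
          (at t within {0..T})
     \<and> (Vpol2 has_real_derivative (lam_p P * (Psi t / (Psi t + 1)))) (at t within {0..T})))"

definition moment :: "(real \<Rightarrow> real \<Rightarrow> real) \<Rightarrow> real \<Rightarrow> real \<Rightarrow> ennreal" where
  "moment y x t = (\<integral>\<^sup>+ v\<in>{0<..}. ennreal (v powr x * y v t) \<partial>lborel)"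

end

theory Submission
  imports Defs
begin

(* Testing the weak equations with phi(v) = (v0 - v)_+^2 shows that no particle is ever smaller
   than the nucleation size v0: phi vanishes at v0, aggregation only merges particles into larger
   ones, and the growth rate g is non-negative (which needs Psi > 0 and a positive total volume),
   so int phi m and then int phi w are non-negative, non-increasing and vanish initially.
   On sizes in [v0, 1) the weight v^x is therefore at most max(1, v0^x) (2 - v)_+^2, while
   v^x <= v^y for v >= 1; and int (2 - v)_+^2 m(v,t) dv is differentiable in t, hence bounded
   on [0,T]. *)

lemma DERIV_within_Icc_nonneg_imp_increasing:
  fixes f f' :: "real \<Rightarrow> real"
  assumes deriv: "\<And>s. s \<in> {c..d} \<Longrightarrow> (f has_real_derivative f' s) (at s within {c..d})"
    and "c \<le> a" "a \<le> b" "b \<le> d"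
    and nonneg: "\<And>s. a < s \<Longrightarrow> s < b \<Longrightarrow> 0 \<le> f' s"
  shows "f a \<le> f b"
proof (rule DERIV_nonneg_imp_increasing_open[OF \<open>a \<le> b\<close>])
  fix s assume s: "a < s" "s < b"
  have "at s within {c..d} = at s" using s assms by (intro at_within_Icc_at) auto
  then show "\<exists>y. DERIV f s :> y \<and> 0 \<le> y" using deriv[of s] nonneg[OF s] s assms by auto
next
  have "continuous_on {c..d} f" using deriv by (rule DERIV_continuous_on)
  then show "continuous_on {a..b} f" by (rule continuous_on_subset) (use assms in auto)
qed

lemma DERIV_nonpos_nonneg_imp_zero:
  fixes F F' :: "real \<Rightarrow> real"
  assumes deriv: "\<And>s. s \<in> {c..d} \<Longrightarrow> (F has_real_derivative F' s) (at s within {c..d})"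
    and "\<And>s. s \<in> {c..d} \<Longrightarrow> F' s \<le> 0" and "F c = 0"
    and "\<And>s. s \<in> {c..d} \<Longrightarrow> 0 \<le> F s"
    and "t \<in> {c..d}"
  shows "F t = 0"
proof -
  have "- F c \<le> - F t"
    by (rule DERIV_within_Icc_nonneg_imp_increasing[where f="\<lambda>s. - F s" and f'="\<lambda>s. - F' s"])
       (use assms in \<open>auto intro: DERIV_minus\<close>)
  then show ?thesis using assms by fastforce
qed

lemma continuous_on_Icc_pos_induct:
  fixes f :: "real \<Rightarrow> real"
  assumes cont: "continuous_on {c..d} f"
    and step: "\<And>t. t \<in> {c..d} \<Longrightarrow> (\<And>s. c \<le> s \<Longrightarrow> s < t \<Longrightarrow> 0 < f s) \<Longrightarrow> 0 < f t"
    and t: "t \<in> {c..d}"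
  shows "0 < f t"
proof (rule ccontr)
  assume "\<not> 0 < f t"
  define Z where "Z = {s \<in> {c..t}. f s \<le> 0}"
  have "closed Z" unfolding Z_def
    by (rule continuous_on_closed_Collect_le[OF continuous_on_subset[OF cont]]) (use t in auto)
  moreover have "Z \<noteq> {}" using t \<open>\<not> 0 < f t\<close> unfolding Z_def by auto
  moreover have "bdd_below Z" unfolding Z_def by (auto intro: bdd_belowI[of _ c])
  ultimately have Inf_Z: "Inf Z \<in> Z" by (intro closed_contains_Inf)
  have "0 < f s" if "c \<le> s" "s < Inf Z" for s
  proof (rule ccontr)
    assume "\<not> 0 < f s"
    with that Inf_Z have "s \<in> Z" unfolding Z_def by auto
    then have "Inf Z \<le> s" using \<open>bdd_below Z\<close> by (rule cInf_lower)
    with that show False by simp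
  qed
  then have "0 < f (Inf Z)" using step Inf_Z t unfolding Z_def by auto
  with Inf_Z show False unfolding Z_def by auto
qed

lemma Psi_decay_rate_le:
  fixes lp pol1 Pr \<psi> V :: real
  assumes "0 < lp" "0 < pol1" "0 < Pr" "0 < \<psi>" "0 \<le> V"
  shows "lp * (\<psi> / (\<psi> + 1)) * ((\<psi> + Pr) / (V + pol1)) \<le> lp * (1 + Pr) / pol1 * \<psi>"
proof -
  have "(\<psi> + Pr) / (\<psi> + 1) \<le> 1 + Pr"
    using assms by (simp add: pos_divide_le_eq algebra_simps)
  moreover have "1 / (V + pol1) \<le> 1 / pol1"
    using assms by (intro divide_left_mono) auto
  ultimately have "lp * \<psi> * ((\<psi> + Pr) / (\<psi> + 1)) * (1 / (V + pol1))
      \<le> lp * \<psi> * (1 + Pr) * (1 / pol1)"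
    using assms by (intro mult_mono mult_left_mono) auto
  then show ?thesis by (simp add: ac_simps)
qed

definition bump :: "real \<Rightarrow> real \<Rightarrow> real" where
  "bump R v = (max (R - v) 0)^2"

lemma bump_nonneg: "0 \<le> bump R v"
  by (simp add: bump_def)

lemma bump_antimono: "u \<le> v \<Longrightarrow> bump R v \<le> bump R u"
  unfolding bump_def by (intro power_mono) auto

lemma bump_eq_0: "R \<le> v \<Longrightarrow> bump R v = 0"
  by (simp add: bump_def)

lemma one_le_bump: "v \<le> R - 1 \<Longrightarrow> 1 \<le> bump R v"
  unfolding bump_def by (intro one_le_power) auto

lemma bump_has_real_derivative: "(bump R has_real_derivative -2 * max (R - v) 0) (at v)"
proof -
  consider "v < R" | "R < v" | "v = R" by linarith
  then show ?thesis
  proof cases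
    case 1
    have "((\<lambda>v. (R - v)^2) has_real_derivative -2 * max (R - v) 0) (at v)"
      using 1 by (auto intro!: derivative_eq_intros)
    then show ?thesis
      by (rule has_field_derivative_transform_within_open[where S="{..<R}"])
         (use 1 in \<open>auto simp: bump_def\<close>)
  next
    case 2
    have "((\<lambda>v. 0) has_real_derivative -2 * max (R - v) 0) (at v)" using 2 by simp
    then show ?thesis
      by (rule has_field_derivative_transform_within_open[where S="{R<..}"])
         (use 2 in \<open>auto simp: bump_def\<close>)
  next
    case 3
    have "((\<lambda>u. (bump R u - bump R R) / (u - R)) \<longlongrightarrow> 0) (at R)"
    proof (rule Lim_null_comparison)
      have "\<bar>(bump R u - bump R R) / (u - R)\<bar> \<le> \<bar>u - R\<bar>" if "u \<noteq> R" for u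
      proof -
        have "bump R u \<le> (u - R)^2" by (cases "R \<le> u") (simp_all add: bump_def power2_commute)
        then show ?thesis
          using that by (simp add: bump_def abs_div power2_eq_square divide_le_eq abs_mult)
      qed
      then show "\<forall>\<^sub>F u in at R. norm ((bump R u - bump R R) / (u - R)) \<le> \<bar>u - R\<bar>"
        by (auto simp: eventually_at_filter)
      show "((\<lambda>u. \<bar>u - R\<bar>) \<longlongrightarrow> 0) (at R)"
        by (rule tendsto_eq_intros refl | simp)+
    qed
    then show ?thesis using 3 by (simp add: has_field_derivative_iff)
  qed
qed

lemma deriv_bump: "deriv (bump R) = (\<lambda>v. -2 * max (R - v) 0)"
  using bump_has_real_derivative DERIV_imp_deriv by blast

lemma test_fun_bump: "test_fun (bump R)"
proof -
  have "\<forall>v. bump R differentiable (at v)"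
    using bump_has_real_derivative real_differentiable_def by blast
  moreover have "continuous_on UNIV (\<lambda>v::real. -2 * max (R - v) 0)"
    by (intro continuous_intros)
  moreover have "\<forall>v\<ge>R. bump R v = 0" by (simp add: bump_eq_0)
  ultimately show ?thesis unfolding test_fun_def deriv_bump by blast
qed

lemma set_integral_nonneg:
  fixes f :: "'a \<Rightarrow> real"
  assumes "\<And>x. x \<in> A \<Longrightarrow> 0 \<le> f x"
  shows "0 \<le> set_lebesgue_integral M A f"
  unfolding set_lebesgue_integral_def
  by (rule integral_nonneg_AE) (auto simp: assms indicator_def)

lemma set_integral_nonpos:
  fixes f :: "'a \<Rightarrow> real"
  assumes "\<And>x. x \<in> A \<Longrightarrow> f x \<le> 0"
  shows "set_lebesgue_integral M A f \<le> 0"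
  using set_integral_nonneg[of A "\<lambda>x. - f x" M] assms
  by (simp add: set_lebesgue_integral_def)

lemma nn_set_integral_eq_set_integral_real:
  fixes f :: "'a \<Rightarrow> real"
  assumes "set_integrable M A f" and "\<And>x. x \<in> A \<Longrightarrow> 0 \<le> f x"
  shows "(\<integral>\<^sup>+x\<in>A. ennreal (f x) \<partial>M) = ennreal (set_lebesgue_integral M A f)"
  unfolding set_lebesgue_integral_def nn_integral_set_ennreal
  using assms by (subst nn_integral_eq_integral)
    (auto simp: mult_ac set_integrable_def indicator_def)

lemma set_integrable_bump_mult:
  fixes f :: "real \<Rightarrow> real"
  assumes f: "set_integrable lborel {0<..} f"
  shows "set_integrable lborel {0<..} (\<lambda>v. bump R v * f v)"
proof (rule set_integrable_bound[of _ _ "\<lambda>v. bump R 0 * f v"])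
  show "set_integrable lborel {0<..} (\<lambda>v. bump R 0 * f v)" using f by simp
  have "(\<lambda>v. indicator {0<..} v *\<^sub>R f v) \<in> borel_measurable lborel"
    using f unfolding set_integrable_def by (rule borel_measurable_integrable)
  then have "(\<lambda>v. bump R v * (indicator {0<..} v *\<^sub>R f v)) \<in> borel_measurable lborel"
    unfolding bump_def by measurable
  then show "set_borel_measurable lborel {0<..} (\<lambda>v. bump R v * f v)"
    unfolding set_borel_measurable_def by (simp add: mult_ac)
  show "AE v in lborel. v \<in> {0<..} \<longrightarrow> norm (bump R v * f v) \<le> norm (bump R 0 * f v)"
    using bump_antimono[of 0] by (auto simp: abs_mult bump_nonneg intro!: mult_right_mono)
qed

lemma AE_eq_0_if_bump_integral_eq_0:
  fixes f :: "real \<Rightarrow> real"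
  assumes f: "set_integrable lborel {0<..} f" and nonneg: "\<And>v. 0 < v \<Longrightarrow> 0 \<le> f v"
    and zero: "(LINT v:{0<..}|lborel. bump R v * f v) = 0"
  shows "AE v in lborel. 0 < v \<longrightarrow> v < R \<longrightarrow> f v = 0"
proof -
  define h where "h v = indicator {0<..} v *\<^sub>R (bump R v * f v)" for v
  have "integrable lborel h"
    using set_integrable_bump_mult[OF f] unfolding h_def set_integrable_def .
  moreover have "AE v in lborel. 0 \<le> h v"
    using nonneg by (auto simp: h_def indicator_def bump_nonneg)
  moreover have "integral\<^sup>L lborel h = 0" using zero unfolding h_def set_lebesgue_integral_def .
  ultimately have "AE v in lborel. h v = 0" by (simp add: integral_nonneg_eq_0_iff_AE)
  then show ?thesis
    by (rule eventually_mono) (auto simp: h_def bump_def)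
qed

lemma powr_le_bump_add_powr:
  fixes v c x y :: real
  assumes "0 < c" "c \<le> v" "x \<le> y"
  shows "v powr x \<le> max 1 (c powr x) * bump 2 v + v powr y"
proof (cases "1 \<le> v")
  case True
  then have "v powr x \<le> v powr y" using assms by (intro powr_mono) auto
  moreover have "0 \<le> max 1 (c powr x) * bump 2 v"
    by (intro mult_nonneg_nonneg) (auto simp: bump_nonneg)
  ultimately show ?thesis by linarith
next
  case False
  have "v powr x \<le> max 1 (c powr x)"
  proof (cases "0 \<le> x")
    case True
    then have "v powr x \<le> 1 powr x" using assms False by (intro powr_mono2) auto
    then show ?thesis by simp
  next
    case False
    then have "v powr x \<le> c powr x" using assms by (intro powr_mono2') auto
    then show ?thesis by simp
  qed
  also have "\<dots> \<le> max 1 (c powr x) * bump 2 v"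
    using one_le_bump[of v 2] False by (simp add: mult_le_cancel_left1)
  finally show ?thesis using powr_ge_zero[of v y] by linarith
qed

lemma nn_set_integral_powr_le_bump_integral_add:
  fixes f :: "real \<Rightarrow> real" and c x y :: real
  assumes f: "set_integrable lborel {0<..} f" and nonneg: "\<And>v. 0 < v \<Longrightarrow> 0 \<le> f v"
    and support: "AE v in lborel. 0 < v \<longrightarrow> v < c \<longrightarrow> f v = 0"
    and "0 < c" "x \<le> y"
  shows "(\<integral>\<^sup>+v\<in>{0<..}. ennreal (v powr x * f v) \<partial>lborel)
      \<le> ennreal (max 1 (c powr x) * (LINT v:{0<..}|lborel. bump 2 v * f v))
        + (\<integral>\<^sup>+v\<in>{0<..}. ennreal (v powr y * f v) \<partial>lborel)"
proof -
  define C where "C = max 1 (c powr x)"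
  define h where "h = (\<lambda>v. indicator {0<..} v * f v)"
  have h_meas[measurable]: "h \<in> borel_measurable borel"
    using borel_measurable_integrable[OF f[unfolded set_integrable_def]] by (simp add: h_def)
  have h_nonneg: "0 \<le> h v" for v
    using nonneg[of v] by (simp add: h_def indicator_def)
  have restrict:
    "(\<integral>\<^sup>+v\<in>{0<..}. ennreal (g v * f v) \<partial>lborel) = (\<integral>\<^sup>+v. ennreal (g v * h v) \<partial>lborel)"
    for g :: "real \<Rightarrow> real"
    by (rule nn_integral_cong) (auto simp: h_def split: split_indicator)
  have "(\<integral>\<^sup>+v. ennreal (v powr x * h v) \<partial>lborel)
      \<le> (\<integral>\<^sup>+v. ennreal (C * bump 2 v * h v) + ennreal (v powr y * h v) \<partial>lborel)"
  proof (rule nn_integral_mono_AE)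
    show "AE v in lborel.
        ennreal (v powr x * h v) \<le> ennreal (C * bump 2 v * h v) + ennreal (v powr y * h v)"
      using support
    proof (rule eventually_mono)
      fix v :: real assume "0 < v \<longrightarrow> v < c \<longrightarrow> f v = 0"
      then have "ennreal (v powr x * h v) \<le> ennreal (C * bump 2 v * h v + v powr y * h v)"
        using powr_le_bump_add_powr[of c v x y] nonneg[of v] assms
        by (intro ennreal_leI, cases "v < c")
           (auto simp: h_def C_def distrib_right[symmetric] intro: mult_right_mono)
      also have "\<dots> = ennreal (C * bump 2 v * h v) + ennreal (v powr y * h v)"
        using h_nonneg[of v] bump_nonneg[of 2 v] by (intro ennreal_plus) (auto simp: C_def)
      finally show
        "ennreal (v powr x * h v) \<le> ennreal (C * bump 2 v * h v) + ennreal (v powr y * h v)" .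
    qed
  qed
  also have "\<dots> = (\<integral>\<^sup>+v. ennreal (C * bump 2 v * h v) \<partial>lborel)
      + (\<integral>\<^sup>+v. ennreal (v powr y * h v) \<partial>lborel)"
    unfolding bump_def by (intro nn_integral_add) measurable
  also have "(\<integral>\<^sup>+v. ennreal (C * bump 2 v * h v) \<partial>lborel)
      = ennreal (C * (LINT v:{0<..}|lborel. bump 2 v * f v))"
  proof -
    have "(\<integral>\<^sup>+v\<in>{0<..}. ennreal (C * bump 2 v * f v) \<partial>lborel)
        = ennreal (LINT v:{0<..}|lborel. C * bump 2 v * f v)"
      using set_integrable_bump_mult[OF f] nonneg
      by (intro nn_set_integral_eq_set_integral_real) (auto simp: C_def bump_nonneg mult.assoc)
    then show ?thesis unfolding restrict by (simp add: mult.assoc)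
  qed
  finally show ?thesis unfolding restrict C_def .
qed

lemma moment_le_const_add_moment_if_bump_bounded:
  fixes y :: "real \<Rightarrow> real \<Rightarrow> real" and S :: "real set"
  assumes "0 < c"
    and integrable: "\<And>t. t \<in> S \<Longrightarrow> set_integrable lborel {0<..} (\<lambda>v. y v t)"
    and nonneg: "\<And>t v. t \<in> S \<Longrightarrow> 0 < v \<Longrightarrow> 0 \<le> y v t"
    and support: "\<And>t. t \<in> S \<Longrightarrow> AE v in lborel. 0 < v \<longrightarrow> v < c \<longrightarrow> y v t = 0"
    and bounded: "\<And>t. t \<in> S \<Longrightarrow> (LINT v:{0<..}|lborel. bump 2 v * y v t) \<le> B"
  shows "\<exists>K>0. \<forall>z t. x \<le> z \<longrightarrow> t \<in> S \<longrightarrow> moment y x t \<le> ennreal K + moment y z t"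
proof (intro exI conjI allI impI)
  define C where "C = max 1 (c powr x)"
  show "0 < max 1 (C * B)" by simp
  fix z t assume "x \<le> z" "t \<in> S"
  then have "moment y x t \<le> ennreal (C * (LINT v:{0<..}|lborel. bump 2 v * y v t)) + moment y z t"
    unfolding moment_def C_def using assms by (intro nn_set_integral_powr_le_bump_integral_add) auto
  also have "\<dots> \<le> ennreal (max 1 (C * B)) + moment y z t"
    using bounded[OF \<open>t \<in> S\<close>]
    by (intro add_right_mono ennreal_leI max.coboundedI2 mult_left_mono) (auto simp: C_def)
  finally show "moment y x t \<le> ennreal (max 1 (C * B)) + moment y z t" .
qed

lemma transport_bump_nonpos:
  fixes g y :: "real \<Rightarrow> real"
  assumes "\<And>v. 0 < v \<Longrightarrow> 0 \<le> g v" and "\<And>v. 0 < v \<Longrightarrow> 0 \<le> y v"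
  shows "(LINT v:{0<..}|lborel. deriv (bump R) v * g v * y v) \<le> 0"
  using assms by (intro set_integral_nonpos) (auto simp: deriv_bump intro!: mult_nonpos_nonneg)

lemma agg_weak_bump_nonpos:
  assumes "0 \<le> lam_a P" and "\<And>v. 0 < v \<Longrightarrow> 0 \<le> y v t"
  shows "agg_weak P Psi (bump R) y t \<le> 0"
proof -
  have "agg_integrand P Psi (bump R) y t (v, u) \<le> 0" if "0 < v" "0 < u" for v u
  proof -
    have "0 \<le> alpha P Psi v u t" using assms unfolding alpha_def alpha0_def by simp
    moreover have "bump R (v + u) - bump R v - bump R u \<le> 0"
      using bump_antimono[of v "v + u" R] bump_nonneg[of R u] that by simp
    ultimately show ?thesis
      using assms that unfolding agg_integrand_def
      by (simp add: mult_nonpos_nonneg mult_nonneg_nonpos)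
  qed
  then show ?thesis unfolding agg_weak_def by (auto intro!: set_integral_nonpos)
qed

locale lpmf_system =
  fixes P :: lpmf_params and T :: real
    and m w :: "real \<Rightarrow> real \<Rightarrow> real"
    and Vmat Vcm Vcw Psi Vpol2 :: "real \<Rightarrow> real"
  assumes params: "params_ok P"
    and solution: "lpmf_solution P T m w Vmat Vcm Vcw Psi Vpol2"
begin

lemma params_pos:
  "0 < lam_a P" "0 < lam_c P" "0 < lam_d P" "0 < lam_m P" "0 < lam_n P"
  "0 < lam_p P" "0 < lam_pol1 P" "0 < Psi_bar P" "0 < Psi_r P"
  using params unfolding params_ok_def by auto

lemmas solution_unfolded = solution[unfolded lpmf_solution_def Let_def]

lemma density_nonneg: "y \<in> {m, w} \<Longrightarrow> 0 \<le> v \<Longrightarrow> t \<in> {0..T} \<Longrightarrow> 0 \<le> y v t"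
  using solution_unfolded by blast

lemma density_initial: "y \<in> {m, w} \<Longrightarrow> 0 \<le> v \<Longrightarrow> y v 0 = 0"
  using solution_unfolded by blast

lemma density_integrable:
  "y \<in> {m, w} \<Longrightarrow> t \<in> {0..T} \<Longrightarrow> set_integrable lborel {0<..} (\<lambda>v. y v t)"
  using solution_unfolded by blast

lemma m_weak_equation:
  assumes "test_fun \<phi>" "t \<in> {0..T}"
  shows "((\<lambda>s. LINT v:{0<..}|lborel. \<phi> v * m v s) has_real_derivative
          ((LINT v:{0<..}|lborel. deriv \<phi> v * growth P Vmat Vcm Vcw Psi v t * m v t)
           + eta0 P Vmat Psi t * \<phi> (v0 P)
           - mu P * (LINT v:{0<..}|lborel. \<phi> v * m v t)
           + agg_weak P Psi \<phi> m t)) (at t within {0..T})"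
  using solution_unfolded assms by blast

lemma w_weak_equation:
  assumes "test_fun \<phi>" "t \<in> {0..T}"
  shows "((\<lambda>s. LINT v:{0<..}|lborel. \<phi> v * w v s) has_real_derivative
          ((LINT v:{0<..}|lborel. deriv \<phi> v * growth P Vmat Vcm Vcw Psi v t * w v t)
           + mu P * (LINT v:{0<..}|lborel. \<phi> v * m v t)
           + agg_weak P Psi \<phi> w t)) (at t within {0..T})"
  using solution_unfolded assms by blast

lemma initial_values: "Vmat 0 = 0" "Vcm 0 = 0" "Vcw 0 = 0" "Vpol2 0 = 0" "Psi 0 = Psi_bar P"
  using solution_unfolded by blast+

lemma volume_ODEs:
  assumes "t \<in> {0..T}"
  shows "(Vmat has_real_derivative
          (rho_p P Vmat Vcm Vcw Psi t * (Vmat t + lam_pol1 P)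
           - Phi P Vmat Psi t
             * (lam_c P * lam_n P + lam_d P * Sigma P Psi m t + lam_d P * Sigma P Psi w t)))
          (at t within {0..T})"
    and "(Vcm has_real_derivative
          (rho_p P Vmat Vcm Vcw Psi t * Vcm t
           + Phi P Vmat Psi t * (lam_c P * lam_n P + lam_d P * Sigma P Psi m t) - lam_m P * Vcm t))
          (at t within {0..T})"
    and "(Vcw has_real_derivative
          (rho_p P Vmat Vcm Vcw Psi t * Vcw t
           + lam_d P * Phi P Vmat Psi t * Sigma P Psi w t + lam_m P * Vcm t))
          (at t within {0..T})"
  using solution_unfolded assms unfolding rho_p_def by blast+

lemma Psi_ODE:
  "t \<in> {0..T} \<Longrightarrow> (Psi has_real_derivative
     (- lam_p P * (Psi t / (Psi t + 1)) * ((Psi t + Psi_r P) / (Vpol2 t + lam_pol1 P))))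
     (at t within {0..T})"
  using solution_unfolded by blast

lemma Vpol2_ODE:
  "t \<in> {0..T} \<Longrightarrow>
     (Vpol2 has_real_derivative (lam_p P * (Psi t / (Psi t + 1)))) (at t within {0..T})"
  using solution_unfolded by blast

lemma Psi_pos:
  assumes "t \<in> {0..T}"
  shows "0 < Psi t"
proof -
  \<comment> \<open>Up to the first zero of \<open>Psi\<close> we have \<open>Psi' \<ge> -K Psi\<close>,
    so \<open>Psi(s) exp(K s)\<close> cannot decrease.\<close>
  define r where
    "r s = lam_p P * (Psi s / (Psi s + 1)) * ((Psi s + Psi_r P) / (Vpol2 s + lam_pol1 P))" for s
  define K where "K = lam_p P * (1 + Psi_r P) / lam_pol1 P"
  have Psi_deriv: "(Psi has_real_derivative - r s) (at s within {0..T})" if "s \<in> {0..T}" for s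
    using Psi_ODE[OF that] by (simp add: r_def)
  have "continuous_on {0..T} Psi" using Psi_deriv by (rule DERIV_continuous_on)
  then show ?thesis
  proof (rule continuous_on_Icc_pos_induct[OF _ _ assms])
    fix t1 assume t1: "t1 \<in> {0..T}" and before: "\<And>s. 0 \<le> s \<Longrightarrow> s < t1 \<Longrightarrow> 0 < Psi s"
    have Vpol2_nonneg: "0 \<le> Vpol2 s" if "0 \<le> s" "s \<le> t1" for s
    proof -
      have "0 \<le> lam_p P * (Psi z / (Psi z + 1))" if "0 < z" "z < s" for z
        using before[of z] that \<open>s \<le> t1\<close> params_pos
        by (intro mult_nonneg_nonneg divide_nonneg_pos) auto
      then have "Vpol2 0 \<le> Vpol2 s"
        by (intro DERIV_within_Icc_nonneg_imp_increasing[OF Vpol2_ODE]) (use that t1 in auto)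
      then show ?thesis using initial_values by simp
    qed
    have exp_deriv:
      "((\<lambda>s. exp (K * s)) has_real_derivative exp (K * s) * K) (at s within {0..T})" for s
      by (auto intro!: derivative_eq_intros)
    have "Psi 0 * exp (K * 0) \<le> Psi t1 * exp (K * t1)"
    proof (rule DERIV_within_Icc_nonneg_imp_increasing[OF DERIV_mult'[OF Psi_deriv exp_deriv]])
      fix s assume s: "0 < s" "s < t1"
      have "r s \<le> K * Psi s"
        unfolding r_def K_def using s before Vpol2_nonneg params_pos
        by (intro Psi_decay_rate_le) auto
      then have "0 \<le> (K * Psi s - r s) * exp (K * s)" by simp
      then show "0 \<le> Psi s * (exp (K * s) * K) + - r s * exp (K * s)"
        by (simp add: algebra_simps)
    qed (use t1 in auto)
    moreover have "Psi 0 * exp (K * 0) = Psi_bar P" using initial_values by simp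
    ultimately have "0 < Psi t1 * exp (K * t1)" using params_pos by linarith
    then show "0 < Psi t1" by (simp add: zero_less_mult_iff)
  qed
qed

lemma total_volume_pos:
  assumes "t \<in> {0..T}"
  shows "0 < Vmat t + Vcm t + Vcw t + lam_pol1 P"
proof -
  define Q where "Q s = Vmat s + Vcm s + Vcw s + lam_pol1 P" for s
  let ?rho = "rho_p P Vmat Vcm Vcw Psi"
  \<comment> \<open>All exchange terms cancel in the sum of the three volume equations.\<close>
  have "(Q has_real_derivative ?rho s * Q s) (at s within {0..T})" if "s \<in> {0..T}" for s
  proof -
    have "(Q has_real_derivative
          (?rho s * (Vmat s + lam_pol1 P)
           - Phi P Vmat Psi s
             * (lam_c P * lam_n P + lam_d P * Sigma P Psi m s + lam_d P * Sigma P Psi w s))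
        + (?rho s * Vcm s + Phi P Vmat Psi s * (lam_c P * lam_n P + lam_d P * Sigma P Psi m s)
           - lam_m P * Vcm s)
        + (?rho s * Vcw s + lam_d P * Phi P Vmat Psi s * Sigma P Psi w s + lam_m P * Vcm s) + 0)
        (at s within {0..T})"
      unfolding Q_def[abs_def] using volume_ODEs[OF that] by (intro DERIV_add DERIV_const)
    then show ?thesis
      by (rule DERIV_cong) (simp add: Q_def algebra_simps)
  qed
  moreover have "0 \<le> ?rho s * Q s" if "s \<in> {0..T}" for s
  proof -
    have "0 \<le> lam_p P * Psi s / (Psi s + 1)"
      using Psi_pos[OF that] params_pos by (intro divide_nonneg_pos mult_nonneg_nonneg) auto
    moreover have "?rho s = lam_p P * Psi s / ((Psi s + 1) * Q s)"
      unfolding rho_p_def Vp_def Q_def by simp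
    ultimately show ?thesis by (cases "Q s = 0") simp_all
  qed
  ultimately have "Q 0 \<le> Q t"
    by (intro DERIV_within_Icc_nonneg_imp_increasing[where f = Q]) (use assms in auto)
  then show ?thesis using initial_values params_pos unfolding Q_def by simp
qed

lemma growth_nonneg:
  assumes "0 < v" "t \<in> {0..T}"
  shows "0 \<le> growth P Vmat Vcm Vcw Psi v t"
proof -
  have "0 < Vp P Vmat Vcm Vcw Psi t"
    unfolding Vp_def using Psi_pos[OF assms(2)] total_volume_pos[OF assms(2)] by simp
  then have "0 \<le> rho_p P Vmat Vcm Vcw Psi t"
    unfolding rho_p_def using Psi_pos[OF assms(2)] params_pos
    by (intro divide_nonneg_pos mult_nonneg_nonneg) auto
  moreover have "0 \<le> rho_d P Vmat Psi t"
    unfolding rho_d_def Phi_def using params_pos by simp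
  ultimately show ?thesis
    unfolding growth_def using assms by simp
qed

lemma bump_moment_m_eq_0:
  assumes "t \<in> {0..T}"
  shows "(LINT v:{0<..}|lborel. bump (v0 P) v * m v t) = 0"
proof -
  have nonneg: "0 \<le> (LINT v:{0<..}|lborel. bump (v0 P) v * m v s)" if "s \<in> {0..T}" for s
    using density_nonneg that by (intro set_integral_nonneg) (simp add: bump_nonneg)
  \<comment> \<open>Nucleation happens at \<open>v0\<close>, where the test function vanishes.\<close>
  have rate_nonpos:
    "(LINT v:{0<..}|lborel. deriv (bump (v0 P)) v * growth P Vmat Vcm Vcw Psi v s * m v s)
      + eta0 P Vmat Psi s * bump (v0 P) (v0 P)
      - mu P * (LINT v:{0<..}|lborel. bump (v0 P) v * m v s)
      + agg_weak P Psi (bump (v0 P)) m s \<le> 0" if s: "s \<in> {0..T}" for s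
  proof -
    have "(LINT v:{0<..}|lborel. deriv (bump (v0 P)) v * growth P Vmat Vcm Vcw Psi v s * m v s)
        \<le> 0"
      using growth_nonneg density_nonneg s by (intro transport_bump_nonpos) auto
    moreover have "agg_weak P Psi (bump (v0 P)) m s \<le> 0"
      using density_nonneg s params_pos by (intro agg_weak_bump_nonpos) auto
    moreover have "0 \<le> mu P * (LINT v:{0<..}|lborel. bump (v0 P) v * m v s)"
      using nonneg[OF s] params_pos by (simp add: mu_def)
    ultimately show ?thesis by (simp add: bump_eq_0)
  qed
  have initial: "(LINT v:{0<..}|lborel. bump (v0 P) v * m v 0) = 0"
    using density_initial by (subst set_lebesgue_integral_cong[where g = "\<lambda>_. 0"]) auto
  show ?thesis
    by (rule DERIV_nonpos_nonneg_imp_zero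
        [OF m_weak_equation[OF test_fun_bump] rate_nonpos initial nonneg assms])
qed

lemma bump_moment_w_eq_0:
  assumes "t \<in> {0..T}"
  shows "(LINT v:{0<..}|lborel. bump (v0 P) v * w v t) = 0"
proof -
  have nonneg: "0 \<le> (LINT v:{0<..}|lborel. bump (v0 P) v * w v s)" if "s \<in> {0..T}" for s
    using density_nonneg that by (intro set_integral_nonneg) (simp add: bump_nonneg)
  have rate_nonpos:
    "(LINT v:{0<..}|lborel. deriv (bump (v0 P)) v * growth P Vmat Vcm Vcw Psi v s * w v s)
      + mu P * (LINT v:{0<..}|lborel. bump (v0 P) v * m v s)
      + agg_weak P Psi (bump (v0 P)) w s \<le> 0" if s: "s \<in> {0..T}" for s
  proof -
    have "(LINT v:{0<..}|lborel. deriv (bump (v0 P)) v * growth P Vmat Vcm Vcw Psi v s * w v s)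
        \<le> 0"
      using growth_nonneg density_nonneg s by (intro transport_bump_nonpos) auto
    moreover have "agg_weak P Psi (bump (v0 P)) w s \<le> 0"
      using density_nonneg s params_pos by (intro agg_weak_bump_nonpos) auto
    ultimately show ?thesis using bump_moment_m_eq_0[OF s] by simp
  qed
  have initial: "(LINT v:{0<..}|lborel. bump (v0 P) v * w v 0) = 0"
    using density_initial by (subst set_lebesgue_integral_cong[where g = "\<lambda>_. 0"]) auto
  show ?thesis
    by (rule DERIV_nonpos_nonneg_imp_zero
        [OF w_weak_equation[OF test_fun_bump] rate_nonpos initial nonneg assms])
qed

lemma no_particles_below_v0:
  assumes "y \<in> {m, w}" "t \<in> {0..T}"
  shows "AE v in lborel. 0 < v \<longrightarrow> v < v0 P \<longrightarrow> y v t = 0"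
  using assms density_integrable density_nonneg bump_moment_m_eq_0 bump_moment_w_eq_0
  by (intro AE_eq_0_if_bump_integral_eq_0) auto

lemma bump_moment_bounded:
  assumes "y \<in> {m, w}"
  shows "\<exists>B. \<forall>t\<in>{0..T}. (LINT v:{0<..}|lborel. bump R v * y v t) \<le> B"
proof -
  have "\<exists>D. ((\<lambda>s. LINT v:{0<..}|lborel. bump R v * y v s) has_real_derivative D)
      (at t within {0..T})" if "t \<in> {0..T}" for t
    using assms m_weak_equation[OF test_fun_bump that] w_weak_equation[OF test_fun_bump that]
    by blast
  then have "continuous_on {0..T} (\<lambda>t. LINT v:{0<..}|lborel. bump R v * y v t)"
    unfolding continuous_on_eq_continuous_within using DERIV_continuous by blast
  then have "bdd_above ((\<lambda>t. LINT v:{0<..}|lborel. bump R v * y v t) ` {0..T})"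
    by (intro bounded_imp_bdd_above compact_imp_bounded compact_continuous_image) auto
  then show ?thesis by (auto simp: bdd_above_def)
qed

lemma moment_le_const_add_moment:
  assumes "y \<in> {m, w}"
  shows "\<exists>K>0. \<forall>z t. x \<le> z \<longrightarrow> t \<in> {0..T} \<longrightarrow> moment y x t \<le> ennreal K + moment y z t"
proof -
  obtain B where "\<forall>t\<in>{0..T}. (LINT v:{0<..}|lborel. bump 2 v * y v t) \<le> B"
    using bump_moment_bounded[OF assms] by blast
  then show ?thesis
    using assms params_pos density_integrable density_nonneg no_particles_below_v0
    by (intro moment_le_const_add_moment_if_bump_bounded[where c = "v0 P" and B = B])
       (auto simp: v0_def)
qed

end

theorem propositionC2:
  fixes P :: lpmf_params and T x :: real
    and m w :: "real \<Rightarrow> real \<Rightarrow> real"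
    and Vmat Vcm Vcw Psi Vpol2 :: "real \<Rightarrow> real"
  assumes "params_ok P"
    and "pa P \<le> 0" and "0 < pb P" and "pb P < 1"
    and "lpmf_solution P T m w Vmat Vcm Vcw Psi Vpol2"
  shows "\<exists>Km Kw. 0 < Km \<and> 0 < Kw \<and>
           (\<forall>y t. x \<le> y \<longrightarrow> t \<in> {0..T} \<longrightarrow>
              moment m x t \<le> ennreal Km + moment m y t \<and>
              moment w x t \<le> ennreal Kw + moment w y t)"
proof -
  interpret lpmf_system P T m w Vmat Vcm Vcw Psi Vpol2
    using assms(1,5) by unfold_locales
  obtain Km where "0 < Km"
    "\<forall>y t. x \<le> y \<longrightarrow> t \<in> {0..T} \<longrightarrow> moment m x t \<le> ennreal Km + moment m y t"
    using moment_le_const_add_moment[of m x] by auto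
  moreover obtain Kw where "0 < Kw"
    "\<forall>y t. x \<le> y \<longrightarrow> t \<in> {0..T} \<longrightarrow> moment w x t \<le> ennreal Kw + moment w y t"
    using moment_le_const_add_moment[of w x] by auto
  ultimately show ?thesis by blast
qed

end
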